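(* Let $C_\theta=\cos\theta\,(|\uparrow\rangle\langle\uparrow|+|\downarrow\rangle\langle\downarrow|)+\sin\theta\,(|\uparrow\rangle\langle\downarrow|-|\downarrow\rangle\langle\uparrow|)$ and $\gamma_{\varphi}=\cos\varphi\,|\uparrow\rangle+\sin\varphi\,|\downarrow\rangle$. (i) If $\theta\in(0,\pi/2)$ and $\varphi_1,\varphi_2\in[0,\pi/2]$ satisfy $\varphi_1+\varphi_2=\theta$, then $(C_\theta,\gamma_{\varphi_1})\sim_l(C_\theta,\gamma_{\varphi_2})$. (ii) For $\theta=1.2$, $\varphi_1=0.2$, $\varphi_2=1.0$, the setups $(C_\theta,\gamma_{\varphi_1})$ and $(C_\theta,\gamma_{\varphi_2})$ are not distributionally equivalent; in particular $p_{(C_\theta,\gamma_{\varphi_1})}(\cdot,2)\neq p_{(C_\theta,\gamma_{\varphi_2})}(\cdot,2)$. Hence asymptotic distributional equivalence does not imply distributional equivalence.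
   Context: $\mathcal{H}=\ell^2(\mathbb{Z})\otimes\mathbb{C}^2$ with position basis $\{|j\rangle\}$ and coin basis $\{|\uparrow\rangle,|\downarrow\rangle\}$. A coin $C=a|\uparrow\rangle\langle\uparrow|+b|\uparrow\rangle\langle\downarrow|+c|\downarrow\rangle\langle\uparrow|+d|\downarrow\rangle\langle\downarrow|\in U(2)$ is non-trivial iff $abcd\neq0$. $T=\sum_{j}|j+1\rangle\langle j|\otimes|\uparrow\rangle\langle\uparrow|+\sum_{j}|j-1\rangle\langle j|\otimes|\downarrow\rangle\langle\downarrow|$, $W(C)=T(\mathbb{1}\otimes C)$. A coin setup $(C,\gamma)$, $\gamma=\alpha|\uparrow\rangle+\beta|\downarrow\rangle$ a unit vector, induces $p_{(C,\gamma)}(j,n)=\langle\psi_n|(|j\rangle\langle j|\otimes\mathbb{1})|\psi_n\rangle$, $\psi_n=W(C)^n(|0\rangle\otimes\gamma)$. Distributional equivalence $\mathcal{C}_1\sim_d\mathcal{C}_2$ means $p_{\mathcal{C}_1}(j,n)=p_{\mathcal{C}_2}(j,n)$ for all $j\in\mathbb{Z}$, $n\in\mathbb{N}$. Known fact (Konno): for a non-trivial coin, if $X_n\sim p_{\mathcal{C}}(\cdot,n)$ then $X_n/n$ converges in distribution to the law with density $f_{\mathcal{C}}(x)=\dfrac{\sqrt{1-|a|^2}\,(1-\lambda_{\mathcal{C}}x)}{\pi(1-x^2)\sqrt{|a|^2-x^2}}$ on $(-|a|,|a|)$ (zero elsewhere), with $\lambda_{\mathcal{C}}=|\alpha|^2-|\beta|^2+\frac{a\alpha\overline{b\beta}+\overline{a\alpha}b\beta}{|a|^2}$.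 Asymptotic distributional equivalence $\mathcal{C}_1\sim_l\mathcal{C}_2$ (for non-trivial coins) means $f_{\mathcal{C}_1}=f_{\mathcal{C}_2}$. *)

theory Defs
  imports Complex_Main
begin

text \<open>A coin C = a|u><u| + b|u><d| + c|d><u| + d|d><d| is represented by its
  matrix entries (a, b, c, d); a coin state gamma = alpha|u> + beta|d> by (alpha, beta).
  A state in l2(Z) (x) C^2 is a function from positions to (up-amplitude, down-amplitude).\<close>

type_synonym coin = "complex \<times> complex \<times> complex \<times> complex"
type_synonym cstate = "complex \<times> complex"
type_synonym qstate = "int \<Rightarrow> complex \<times> complex"

definition coin_a :: "coin \<Rightarrow> complex" where "coin_a C = fst C"
definition coin_b :: "coin \<Rightarrow> complex" where "coin_b C = fst (snd C)"
definition coin_c :: "coin \<Rightarrow> complex" where "coin_c C = fst (snd (snd C))"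
definition coin_d :: "coin \<Rightarrow> complex" where "coin_d C = snd (snd (snd C))"

definition unitary_coin :: "coin \<Rightarrow> bool" where
  "unitary_coin C \<longleftrightarrow>
     (let a = coin_a C; b = coin_b C; c = coin_c C; d = coin_d C in
       cmod a ^ 2 + cmod c ^ 2 = 1 \<and> cmod b ^ 2 + cmod d ^ 2 = 1 \<and>
       cnj a * b + cnj c * d = 0)"

definition nontrivial_coin :: "coin \<Rightarrow> bool" where
  "nontrivial_coin C \<longleftrightarrow> coin_a C * coin_b C * coin_c C * coin_d C \<noteq> 0"

text \<open>W(C) = T (1 (x) C): first apply the coin at each site, then shift up-components
  by +1 and down-components by -1.\<close>
definition walk_step :: "coin \<Rightarrow> qstate \<Rightarrow> qstate" where
  "walk_step C \<psi> = (\<lambda>j.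
     (coin_a C * fst (\<psi> (j - 1)) + coin_b C * snd (\<psi> (j - 1)),
      coin_c C * fst (\<psi> (j + 1)) + coin_d C * snd (\<psi> (j + 1))))"

definition init_state :: "cstate \<Rightarrow> qstate" where
  "init_state \<gamma> = (\<lambda>j. if j = 0 then \<gamma> else (0, 0))"

definition walk_state :: "coin \<Rightarrow> cstate \<Rightarrow> nat \<Rightarrow> qstate" where
  "walk_state C \<gamma> n = (walk_step C ^^ n) (init_state \<gamma>)"

definition prob_dist :: "coin \<times> cstate \<Rightarrow> int \<Rightarrow> nat \<Rightarrow> real" where
  "prob_dist S j n =
     (let v = walk_state (fst S) (snd S) n j in cmod (fst v) ^ 2 + cmod (snd v) ^ 2)"

definition dist_equiv :: "coin \<times> cstate \<Rightarrow> coin \<times> cstate \<Rightarrow> bool" where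
  "dist_equiv S1 S2 \<longleftrightarrow> (\<forall>j n. prob_dist S1 j n = prob_dist S2 j n)"

definition lambda_setup :: "coin \<times> cstate \<Rightarrow> real" where
  "lambda_setup S =
     (let a = coin_a (fst S); b = coin_b (fst S); \<alpha> = fst (snd S); \<beta> = snd (snd S) in
       cmod \<alpha> ^ 2 - cmod \<beta> ^ 2
       + Re (a * \<alpha> * cnj (b * \<beta>) + cnj (a * \<alpha>) * b * \<beta>) / cmod a ^ 2)"

definition limit_density :: "coin \<times> cstate \<Rightarrow> real \<Rightarrow> real" where
  "limit_density S x =
     (let r = cmod (coin_a (fst S)); l = lambda_setup S in
       if - r < x \<and> x < r
       then sqrt (1 - r ^ 2) * (1 - l * x) / (pi * (1 - x ^ 2) * sqrt (r ^ 2 - x ^ 2))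
       else 0)"

definition asym_equiv :: "coin \<times> cstate \<Rightarrow> coin \<times> cstate \<Rightarrow> bool" where
  "asym_equiv S1 S2 \<longleftrightarrow>
     nontrivial_coin (fst S1) \<and> nontrivial_coin (fst S2) \<and>
     limit_density S1 = limit_density S2"

definition rot_coin :: "real \<Rightarrow> coin" where
  "rot_coin \<theta> = (complex_of_real (cos \<theta>), complex_of_real (sin \<theta>),
                  - complex_of_real (sin \<theta>), complex_of_real (cos \<theta>))"

definition gamma_phi :: "real \<Rightarrow> cstate" where
  "gamma_phi \<phi> = (complex_of_real (cos \<phi>), complex_of_real (sin \<phi>))"

end

theory Submission
  imports Defs "HOL-Analysis.Complex_Transcendental"
begin

text \<open>The limit density sees the initial state only through \<open>\<lambda>\<close>, and for the rotation
  coin \<open>\<lambda> = cos (2\<phi> - \<theta>) / cos \<theta>\<close>, which is invariant under the reflection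
  \<open>\<phi> \<mapsto> \<theta> - \<phi>\<close>. At time 2, however, the walker sits at position 2 with probability
  \<open>(cos \<theta> cos (\<theta> - \<phi>))\<^sup>2\<close>, which does tell \<open>\<phi> = 1/5\<close> and \<open>\<phi> = 1\<close> apart
  for \<open>\<theta> = 6/5\<close>.\<close>

lemma nontrivial_rot_coin_iff: "nontrivial_coin (rot_coin t) \<longleftrightarrow> cos t \<noteq> 0 \<and> sin t \<noteq> 0"
  by (auto simp: nontrivial_coin_def rot_coin_def coin_a_def coin_b_def coin_c_def coin_d_def)

lemma limit_density_eqI:
  assumes "fst S1 = fst S2" and "lambda_setup S1 = lambda_setup S2"
  shows "limit_density S1 = limit_density S2"
  using assms by (simp add: limit_density_def Let_def fun_eq_iff)

lemma lambda_setup_rot_coin: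
  assumes "cos t \<noteq> 0"
  shows "lambda_setup (rot_coin t, gamma_phi p) = cos (2 * p - t) / cos t"
proof -
  have "lambda_setup (rot_coin t, gamma_phi p)
      = cos p ^ 2 - sin p ^ 2 + 2 * sin t * (sin p * cos p) / cos t"
    using assms
    by (simp add: lambda_setup_def rot_coin_def gamma_phi_def coin_a_def coin_b_def Let_def
        power2_eq_square)
  also have "\<dots> = (cos (2 * p) * cos t + sin (2 * p) * sin t) / cos t"
    unfolding cos_double sin_double using assms by (simp add: field_simps)
  also have "\<dots> = cos (2 * p - t) / cos t"
    by (simp add: cos_diff)
  finally show ?thesis .
qed

theorem asym_equiv_rot_coin_reflection:
  assumes "nontrivial_coin (rot_coin t)" and "p1 + p2 = t"
  shows "asym_equiv (rot_coin t, gamma_phi p1) (rot_coin t, gamma_phi p2)"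
proof -
  have "cos t \<noteq> 0" using assms(1) by (simp add: nontrivial_rot_coin_iff)
  moreover have "2 * p2 - t = - (2 * p1 - t)" using assms(2) by simp
  then have "cos (2 * p2 - t) = cos (2 * p1 - t)" by (simp only: cos_minus)
  ultimately have "lambda_setup (rot_coin t, gamma_phi p1) = lambda_setup (rot_coin t, gamma_phi p2)"
    by (simp add: lambda_setup_rot_coin)
  then show ?thesis
    using assms(1) by (simp add: asym_equiv_def limit_density_eqI)
qed

lemma walk_state_2_2: "walk_state C (\<alpha>, \<beta>) 2 2 = (coin_a C * (coin_a C * \<alpha> + coin_b C * \<beta>), 0)"
  by (simp add: walk_state_def walk_step_def init_state_def numeral_2_eq_2)

lemma prob_dist_rot_coin_2_2:
  "prob_dist (rot_coin t, gamma_phi p) 2 2 = (cos t * cos (t - p)) ^ 2"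
proof -
  have "walk_state (rot_coin t) (gamma_phi p) 2 2 = (of_real (cos t * cos (t - p)), 0)"
    by (simp add: gamma_phi_def walk_state_2_2 rot_coin_def coin_a_def coin_b_def cos_diff)
  then show ?thesis
    by (simp add: prob_dist_def Let_def norm_mult power_mult_distrib)
qed

theorem mainTheorem6:
  shows "(\<forall>\<theta> \<phi>1 \<phi>2. 0 < \<theta> \<and> \<theta> < pi / 2 \<and>
            0 \<le> \<phi>1 \<and> \<phi>1 \<le> pi / 2 \<and> 0 \<le> \<phi>2 \<and> \<phi>2 \<le> pi / 2 \<and> \<phi>1 + \<phi>2 = \<theta> \<longrightarrow>
            asym_equiv (rot_coin \<theta>, gamma_phi \<phi>1) (rot_coin \<theta>, gamma_phi \<phi>2))
       \<and> (\<not> dist_equiv (rot_coin (6/5), gamma_phi (1/5)) (rot_coin (6/5), gamma_phi 1)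
          \<and> (\<exists>j. prob_dist (rot_coin (6/5), gamma_phi (1/5)) j 2
                  \<noteq> prob_dist (rot_coin (6/5), gamma_phi 1) j 2)
          \<and> asym_equiv (rot_coin (6/5), gamma_phi (1/5)) (rot_coin (6/5), gamma_phi 1))"
proof -
  have nontrivial: "nontrivial_coin (rot_coin t)" if "0 < t" "t < pi / 2" for t
    using that cos_gt_zero_pi[of t] sin_gt_zero[of t] by (simp add: nontrivial_rot_coin_iff)
  have "cos (6/5 :: real) > 0" and "cos (1 :: real) > 0" and "cos (1 :: real) < cos (1/5)"
    using pi_gt3 by (auto intro: cos_gt_zero_pi cos_monotone_0_pi)
  then have "(cos (6/5) * cos (6/5 - 1/5)) ^ 2 \<noteq> (cos (6/5) * cos (6/5 - 1 :: real)) ^ 2"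
    by (simp add: power_mult_distrib)
  then have differ: "prob_dist (rot_coin (6/5), gamma_phi (1/5)) 2 2
                   \<noteq> prob_dist (rot_coin (6/5), gamma_phi 1) 2 2"
    unfolding prob_dist_rot_coin_2_2 .
  show ?thesis
    using nontrivial asym_equiv_rot_coin_reflection pi_gt3 differ
    by (auto simp: dist_equiv_def)
qed

end
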